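(* Let $\kappa=\frac4{27}$ and let the polynomials $e_n(x)$ be defined as in the context. Then for every integer $p\ge0$: $$e_{3p}(x)=\frac{1}{(-\kappa)^{3p}}\sum_{l=0}^p27^l\sum_{k=0}^{\lfloor 3l/2\rfloor}\frac{(-1)^k}{3^k}\binom{p+2l-k}{3l-2k,\ k,\ p-l}\Big(1-\frac{x}{3\kappa}\Big)^k,$$ $$e_{3p+1}(x)=\frac{3}{(-\kappa)^{3p+1}}\sum_{l=0}^p27^l\sum_{k=0}^{\lfloor(3l+1)/2\rfloor}\frac{(-1)^k}{3^k}\binom{p+2l+1-k}{3l+1-2k,\ k,\ p-l}\Big(1-\frac{x}{3\kappa}\Big)^k,$$ $$e_{3p+2}(x)=\frac{9}{(-\kappa)^{3p+2}}\sum_{l=0}^p27^l\sum_{k=0}^{\lfloor 3l/2\rfloor+1}\frac{(-1)^k}{3^k}\binom{p+2l+2-k}{3l+2-2k,\ k,\ p-l}\Big(1-\frac{x}{3\kappa}\Big)^k.$$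
   Context: The polynomials $e_n(x)$, $n\ge0$, are defined by $e_n(x)=(-\kappa)^{-n}\sum_{m_1+2m_2+3m_3=n}(-1)^{m_2}\binom{m_1+m_2+m_3}{m_1,m_2,m_3}3^{m_1+m_2}\big(1-\frac{x}{3\kappa}\big)^{m_2}$, the sum over nonnegative integers $m_1,m_2,m_3$; equivalently, they are the coefficients of the formal power series $\frac{1}{(1+t/\kappa)^3-x\,t^2/\kappa^3}=\sum_{n\ge0}e_n(x)t^n$. Here $\binom{k}{k_1,k_2,k_3}=\frac{k!}{k_1!k_2!k_3!}$ is the trinomial coefficient. *)

theory Defs
  imports Complex_Main
begin

definition trinomial :: "nat \<Rightarrow> nat \<Rightarrow> nat \<Rightarrow> nat \<Rightarrow> real" where
  "trinomial k k1 k2 k3 = fact k / (fact k1 * fact k2 * fact k3)"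

definition e_poly :: "real \<Rightarrow> nat \<Rightarrow> real \<Rightarrow> real" where
  "e_poly \<kappa> n x = (- \<kappa>) powi (- int n) *
     (\<Sum>(m1, m2, m3) \<in> {(m1::nat, m2::nat, m3::nat). m1 + 2 * m2 + 3 * m3 = n}.
        (-1) ^ m2 * trinomial (m1 + m2 + m3) m1 m2 m3 * 3 ^ (m1 + m2) * (1 - x / (3 * \<kappa>)) ^ m2)"

end

theory Submission
  imports Defs
begin

text \<open>Writing \<open>n = 3p + r\<close> with \<open>r \<le> 2\<close>, the substitution \<open>m\<^sub>3 = p - l\<close>, \<open>m\<^sub>2 = k\<close>,
  \<open>m\<^sub>1 = 3l + r - 2k\<close> turns the constraint \<open>m\<^sub>1 + 2m\<^sub>2 + 3m\<^sub>3 = n\<close> into the independent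
  ranges \<open>0 \<le> l \<le> p\<close>, \<open>0 \<le> k \<le> \<lfloor>(3l + r)/2\<rfloor>\<close>.  Under it the summand of \<open>e\<^sub>n\<close> becomes the
  one in the theorem, since \<open>m\<^sub>1 + m\<^sub>2 + m\<^sub>3 = p + 2l + r - k\<close> and
  \<open>3\<^bsup>m\<^sub>1 + m\<^sub>2\<^esup> = 3\<^sup>r 27\<^sup>l / 3\<^sup>k\<close>.  The identity holds for every \<open>\<kappa>\<close>; the value \<open>\<kappa> = 4/27\<close> is not used.\<close>

lemma sum_weighted_triples_reindex:
  fixes f :: "nat \<times> nat \<times> nat \<Rightarrow> 'a::comm_monoid_add"
  assumes "r \<le> 2"
  shows "(\<Sum>m \<in> {(m1, m2, m3). m1 + 2 * m2 + 3 * m3 = 3 * p + r}. f m)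
       = (\<Sum>l = 0..p. \<Sum>k = 0..(3 * l + r) div 2. f (3 * l + r - 2 * k, k, p - l))"
proof -
  let ?A = "SIGMA l:{0..p}. {0..(3 * l + r) div 2}"
  let ?B = "{(m1, m2, m3). m1 + 2 * m2 + 3 * m3 = 3 * p + r}"
  let ?h = "\<lambda>(l, k). (3 * l + r - 2 * k, k, p - l)"
  have "bij_betw ?h ?A ?B"
    by (rule bij_betw_byWitness[where f' = "\<lambda>(m1, m2, m3). (p - m3, m2)"])
      (use assms in auto)
  then have "(\<Sum>m \<in> ?B. f m) = (\<Sum>a \<in> ?A. f (?h a))"
    by (simp add: sum.reindex_bij_betw)
  also have "\<dots> = (\<Sum>l = 0..p. \<Sum>k = 0..(3 * l + r) div 2. f (3 * l + r - 2 * k, k, p - l))"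
    by (subst sum.Sigma) (auto simp: case_prod_beta)
  finally show ?thesis .
qed

lemma power_int_neg_of_nat: "(a::'a::division_ring) powi (- int n) = 1 / a ^ n"
  by (simp add: power_int_minus divide_inverse)

lemma e_poly_3p_plus_r:
  fixes \<kappa> x :: real
  assumes "r \<le> 2"
  shows "e_poly \<kappa> (3 * p + r) x = 3 ^ r / (- \<kappa>) ^ (3 * p + r) *
     (\<Sum>l = 0..p. 27 ^ l * (\<Sum>k = 0..(3 * l + r) div 2.
        (-1) ^ k / 3 ^ k * trinomial (p + 2 * l + r - k) (3 * l + r - 2 * k) k (p - l)
        * (1 - x / (3 * \<kappa>)) ^ k))"
proof -
  define y where "y = 1 - x / (3 * \<kappa>)"
  have summand: "(-1) ^ k * trinomial (3 * l + r - 2 * k + k + (p - l)) (3 * l + r - 2 * k) k (p - l)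
        * 3 ^ (3 * l + r - 2 * k + k) * y ^ k
      = 3 ^ r * (27 ^ l * ((-1) ^ k / 3 ^ k
        * trinomial (p + 2 * l + r - k) (3 * l + r - 2 * k) k (p - l) * y ^ k))"
    if "l \<le> p" "k \<le> (3 * l + r) div 2" for l k
  proof -
    have exponent: "3 * l + r - 2 * k + k = 3 * l + r - k"
      and size: "3 * l + r - k + (p - l) = p + 2 * l + r - k"
      using that by auto
    have "(3::real) ^ (3 * l + r - k) = 3 ^ (3 * l + r) / 3 ^ k"
      using that by (simp add: power_diff)
    also have "\<dots> = 3 ^ r * 27 ^ l / 3 ^ k"
      by (simp add: power_add power_mult)
    finally show ?thesis
      unfolding exponent size by simp
  qed
  have "e_poly \<kappa> (3 * p + r) x = 1 / (- \<kappa>) ^ (3 * p + r) *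
     (\<Sum>l = 0..p. \<Sum>k = 0..(3 * l + r) div 2.
        (-1) ^ k * trinomial (3 * l + r - 2 * k + k + (p - l)) (3 * l + r - 2 * k) k (p - l)
          * 3 ^ (3 * l + r - 2 * k + k) * y ^ k)"
    unfolding e_poly_def power_int_neg_of_nat y_def
    by (subst sum_weighted_triples_reindex[OF assms]) simp
  also have "\<dots> = 1 / (- \<kappa>) ^ (3 * p + r) * (3 ^ r *
     (\<Sum>l = 0..p. 27 ^ l * (\<Sum>k = 0..(3 * l + r) div 2.
        (-1) ^ k / 3 ^ k * trinomial (p + 2 * l + r - k) (3 * l + r - 2 * k) k (p - l) * y ^ k)))"
    unfolding sum_distrib_left by (intro arg_cong2[where f = "(*)"] sum.cong refl summand) auto
  finally show ?thesis
    unfolding y_def by simp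
qed

theorem proposition10:
  fixes \<kappa> x :: real and p :: nat
  assumes "\<kappa> = 4 / 27"
  shows "e_poly \<kappa> (3 * p) x =
           1 / (- \<kappa>) ^ (3 * p) *
           (\<Sum>l = 0..p. 27 ^ l * (\<Sum>k = 0..(3 * l) div 2.
              (-1) ^ k / 3 ^ k * trinomial (p + 2 * l - k) (3 * l - 2 * k) k (p - l)
              * (1 - x / (3 * \<kappa>)) ^ k))
       \<and> e_poly \<kappa> (3 * p + 1) x =
           3 / (- \<kappa>) ^ (3 * p + 1) *
           (\<Sum>l = 0..p. 27 ^ l * (\<Sum>k = 0..(3 * l + 1) div 2.
              (-1) ^ k / 3 ^ k * trinomial (p + 2 * l + 1 - k) (3 * l + 1 - 2 * k) k (p - l)
              * (1 - x / (3 * \<kappa>)) ^ k))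
       \<and> e_poly \<kappa> (3 * p + 2) x =
           9 / (- \<kappa>) ^ (3 * p + 2) *
           (\<Sum>l = 0..p. 27 ^ l * (\<Sum>k = 0..(3 * l) div 2 + 1.
              (-1) ^ k / 3 ^ k * trinomial (p + 2 * l + 2 - k) (3 * l + 2 - 2 * k) k (p - l)
              * (1 - x / (3 * \<kappa>)) ^ k))"
proof -
  have "(3 * l + 2) div 2 = 3 * l div 2 + 1" for l :: nat
    by simp
  then show ?thesis
    using e_poly_3p_plus_r[of 0 \<kappa> p x] e_poly_3p_plus_r[of 1 \<kappa> p x] e_poly_3p_plus_r[of 2 \<kappa> p x]
    by simp
qed

end
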